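(* Let $M$ be a matroid such that the 1-skeleton of $P(M)$ (equivalently, the base graph $G(M)$) is isomorphic to the graph of a $d$-dimensional hypercube. Then $P(M)$ is indecomposable.
   Context: For a matroid $N$ on $E=\{1,\dots,n\}$, $P(N)=\mathrm{conv}\{\sum_{i\in B}e_i : B \text{ a base of } N\}\subset\mathbb{R}^n$. The base graph $G(M)$ has the bases of $M$ as vertices, two bases adjacent iff their symmetric difference has exactly two elements. A matroid base polytope decomposition of $P(M)$ is an expression $P(M)=\bigcup_{i=1}^t P(M_i)$ with each $M_i$ a matroid on $E$ and $P(M_i)\cap P(M_j)$ a face of both $P(M_i)$ and $P(M_j)$ for all $i\neq j$. $P(M)$ is decomposable if it has such a decomposition with $t\ge 2$ and every $P(M_i)\neq P(M)$, and indecomposable otherwise. *)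

theory Defs
  imports "HOL-Analysis.Analysis"
begin

text \<open>A matroid on the finite ground set E = UNIV :: 'n set, given by its family of bases
  (basis exchange axiom).\<close>
definition matroid_bases :: "'n::finite set set \<Rightarrow> bool" where
  "matroid_bases \<B> \<longleftrightarrow> \<B> \<noteq> {} \<and>
     (\<forall>B1\<in>\<B>. \<forall>B2\<in>\<B>. \<forall>x\<in>B1 - B2. \<exists>y\<in>B2 - B1. insert y (B1 - {x}) \<in> \<B>)"

definition ind_vec :: "'n::finite set \<Rightarrow> real ^ 'n" where
  "ind_vec S = (\<chi> i. if i \<in> S then 1 else 0)"

definition base_polytope :: "'n::finite set set \<Rightarrow> (real ^ 'n) set" where
  "base_polytope \<B> = convex hull (ind_vec ` \<B>)"

definition sdiff :: "'a set \<Rightarrow> 'a set \<Rightarrow> 'a set" where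
  "sdiff A B = (A - B) \<union> (B - A)"

definition decomposable :: "'n::finite set set \<Rightarrow> bool" where
  "decomposable \<B> \<longleftrightarrow> (\<exists>(t::nat) (Ms :: nat \<Rightarrow> 'n set set).
      t \<ge> 2 \<and>
      (\<forall>i<t. matroid_bases (Ms i)) \<and>
      base_polytope \<B> = (\<Union>i<t. base_polytope (Ms i)) \<and>
      (\<forall>i<t. \<forall>j<t. i \<noteq> j \<longrightarrow>
          (base_polytope (Ms i) \<inter> base_polytope (Ms j)) face_of base_polytope (Ms i) \<and>
          (base_polytope (Ms i) \<inter> base_polytope (Ms j)) face_of base_polytope (Ms j)) \<and>
      (\<forall>i<t. base_polytope (Ms i) \<noteq> base_polytope \<B>))"

definition indecomposable :: "'n::finite set set \<Rightarrow> bool" where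
  "indecomposable \<B> \<longleftrightarrow> \<not> decomposable \<B>"

text \<open>Base graph G(M): vertices the bases, adjacent iff symmetric difference has 2 elements.
  The d-dimensional hypercube graph: vertices the subsets of {0..<d}, adjacent iff their
  symmetric difference has exactly 1 element.\<close>
definition base_graph_iso_hypercube :: "'n::finite set set \<Rightarrow> nat \<Rightarrow> bool" where
  "base_graph_iso_hypercube \<B> d \<longleftrightarrow> (\<exists>f. bij_betw f \<B> (Pow {..<d}) \<and>
      (\<forall>B1\<in>\<B>. \<forall>B2\<in>\<B>. card (sdiff B1 B2) = 2 \<longleftrightarrow> card (sdiff (f B1) (f B2)) = 1))"

end

theory Submission
  imports Defs
begin

(* Suppose P(M) = P(M_1) \<union> ... \<union> P(M_t) with every P(M_i) \<noteq> P(M).  The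
   centroid c of the vertices of P(M) lies in some piece P(S).  Three facts then force S = M:
   (1) the vertices of a 0/1-polytope are exactly its generating 0/1-points, so the bases of S
       are bases of M;
   (2) if every base of S contains an element x, then P(S), hence c, lies in the hyperplane
       y_x = 1, and c_x = 1 means that every base of M contains x;
   (3) a hypercube graph has no triangles, so in M a base B and an element x \<in> B admit at
       most one exchange B - x + y.
   Take a base B of S, a base B' of M and x \<in> B - B'.  By (2) some base of S avoids x, so S
   offers an exchange of x in B; M offers one towards B', and by (3) they coincide.  Hence B'
   is reached from B inside S by induction on |B - B'|. *)


section \<open>Vertices of 0/1-polytopes\<close>

lemma zero_one_strict_convex_combination:
  fixes a b u x :: real
  assumes "0 < u" "u < 1" "0 \<le> a" "a \<le> 1" "0 \<le> b" "b \<le> 1"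
    and "x = 0 \<or> x = 1" and "x = (1 - u) * a + u * b"
  shows "a = x"
proof -
  have nonneg: "0 \<le> (1-u) * a" "0 \<le> u * b" "0 \<le> (1-u) * (1-a)" "0 \<le> u * (1-b)"
    using assms by auto
  show ?thesis
  proof (cases "x = 0")
    case True
    then have "(1-u) * a = 0" using nonneg assms(8) by linarith
    then show ?thesis using True assms(2) by simp
  next
    case False
    then have "(1-u) * (1-a) + u * (1-b) = 0"
      using assms(7,8) by (simp add: algebra_simps)
    then have "(1-u) * (1-a) = 0" using nonneg by linarith
    then show ?thesis using False assms(2,7) by simp
  qed
qed

lemma convex_hull_ind_vec_subset_cube:
  "convex hull (ind_vec ` X) \<subseteq> {y :: real^'n::finite. \<forall>i. 0 \<le> y$i \<and> y$i \<le> 1}"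
proof (rule hull_minimal)
  show "ind_vec ` X \<subseteq> {y :: real^'n. \<forall>i. 0 \<le> y$i \<and> y$i \<le> 1}"
    by (auto simp: ind_vec_def)
  show "convex {y :: real^'n. \<forall>i. 0 \<le> y$i \<and> y$i \<le> 1}"
    unfolding convex_def by (auto intro!: add_nonneg_nonneg convex_bound_le)
qed

lemma zero_one_point_extreme_point_of_cube_subset:
  fixes v :: "real^'n::finite"
  assumes H: "H \<subseteq> {y. \<forall>i. 0 \<le> y$i \<and> y$i \<le> 1}" and v: "v \<in> H"
    and zero_one: "\<And>i. v$i = 0 \<or> v$i = 1"
  shows "v extreme_point_of H"
  unfolding extreme_point_of_def
proof (intro conjI ballI notI)
  fix a b assume ab: "a \<in> H" "b \<in> H" and "v \<in> open_segment a b"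
  then obtain u where u: "a \<noteq> b" "0 < u" "u < 1" "v = (1-u) *\<^sub>R a + u *\<^sub>R b"
    by (auto simp: in_segment)
  have "a$i = v$i \<and> b$i = v$i" for i
  proof
    have "v$i = (1-u) * a$i + u * b$i" using u(4) by simp
    then show "a$i = v$i"
      using zero_one_strict_convex_combination[of u "a$i" "b$i"] u ab H zero_one by blast
    have "v$i = (1-(1-u)) * b$i + (1-u) * a$i" using u(4) by simp
    moreover have "0 < 1-u" "1-u < 1" using u by auto
    ultimately show "b$i = v$i"
      using zero_one_strict_convex_combination[of "1-u" "b$i" "a$i" "v$i"] ab H zero_one
      by blast
  qed
  then show False using u(1) by (simp add: vec_eq_iff)
qed (use v in simp)

lemma ind_vec_inj: "inj ind_vec"
  by (rule injI) (auto simp: ind_vec_def vec_eq_iff split: if_splits)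

lemma ind_vec_mem_convex_hull_iff:
  "ind_vec B \<in> convex hull (ind_vec ` X) \<longleftrightarrow> B \<in> X"
proof
  assume "ind_vec B \<in> convex hull (ind_vec ` X)"
  then have "ind_vec B extreme_point_of convex hull (ind_vec ` X)"
    by (intro zero_one_point_extreme_point_of_cube_subset convex_hull_ind_vec_subset_cube)
       (auto simp: ind_vec_def)
  then have "ind_vec B \<in> ind_vec ` X" by (rule extreme_point_of_convex_hull)
  then show "B \<in> X" using ind_vec_inj by (auto dest: injD)
qed (simp add: hull_inc)

lemma base_polytope_subset_imp_bases_subset:
  assumes "base_polytope S \<subseteq> base_polytope \<B>"
  shows "S \<subseteq> \<B>"
  using assms ind_vec_mem_convex_hull_iff unfolding base_polytope_def
  by (blast intro: hull_inc)

lemma base_polytope_in_coordinate_hyperplane: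
  fixes S :: "'n::finite set set"
  assumes "\<forall>B\<in>S. x \<in> B"
  shows "base_polytope S \<subseteq> {y. y$x = 1}"
  unfolding base_polytope_def
proof (rule hull_minimal)
  show "ind_vec ` S \<subseteq> {y. y$x = 1}" using assms by (auto simp: ind_vec_def)
  show "convex {y :: real^'n. y$x = 1}" unfolding convex_def by (auto simp: algebra_simps)
qed


section \<open>The centroid of a base polytope\<close>

definition centroid :: "'n::finite set set \<Rightarrow> real^'n" where
  "centroid \<B> = (\<Sum>B\<in>\<B>. (1 / real (card \<B>)) *\<^sub>R ind_vec B)"

lemma centroid_mem_base_polytope:
  assumes "\<B> \<noteq> {}"
  shows "centroid \<B> \<in> base_polytope \<B>"
  unfolding centroid_def base_polytope_def
proof (rule convex_sum)
  show "(\<Sum>B\<in>\<B>. 1 / real (card \<B>)) = 1" using assms by simp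
qed (auto simp: hull_inc)

lemma centroid_component:
  "centroid \<B> $ x = real (card {B\<in>\<B>. x \<in> B}) / real (card \<B>)"
proof -
  have "centroid \<B> $ x = (1 / real (card \<B>)) * (\<Sum>B\<in>\<B>. if x \<in> B then 1 else 0)"
    by (simp add: centroid_def ind_vec_def sum_distrib_left)
  also have "(\<Sum>B\<in>\<B>. if x \<in> B then 1 else 0 :: real) = real (card {B\<in>\<B>. x \<in> B})"
    by (simp add: sum.If_cases Int_def)
  finally show ?thesis by simp
qed

lemma centroid_component_eq_1:
  assumes "\<B> \<noteq> {}" and "centroid \<B> $ x = 1"
  shows "\<forall>B\<in>\<B>. x \<in> B"
proof -
  have "card {B\<in>\<B>. x \<in> B} = card \<B>"
    using assms centroid_component[of \<B> x] by (simp add: field_simps)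
  then have "{B\<in>\<B>. x \<in> B} = \<B>" by (intro card_subset_eq) auto
  then show ?thesis by blast
qed

lemma common_element_through_centroid:
  assumes "\<B> \<noteq> {}" and "centroid \<B> \<in> base_polytope S" and "\<forall>B\<in>S. x \<in> B"
  shows "\<forall>B\<in>\<B>. x \<in> B"
  using assms base_polytope_in_coordinate_hyperplane centroid_component_eq_1 by blast


section \<open>Matroids with unique exchanges\<close>

lemma sdiff_exchange:
  assumes "x \<in> B" "y \<notin> B"
  shows "sdiff B (insert y (B - {x})) = {x, y}"
  using assms unfolding sdiff_def by auto

lemma sdiff_triangle: "sdiff U W = sdiff (sdiff U V) (sdiff V W)"
  unfolding sdiff_def by auto

text \<open>The hypercube graph has no triangles (its adjacency changes the parity of |X|).\<close>
lemma no_hypercube_triangle: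
  assumes "card (sdiff U V) = 1" "card (sdiff V W) = 1"
  shows "card (sdiff U W) \<noteq> 1"
proof -
  obtain p where "sdiff U V = {p}" using assms(1) card_1_singletonE by blast
  moreover obtain q where "sdiff V W = {q}" using assms(2) card_1_singletonE by blast
  ultimately have "sdiff U W = sdiff {p} {q}" by (simp add: sdiff_triangle[of U W V])
  then show ?thesis by (cases "p = q") (auto simp: sdiff_def)
qed

definition unique_exchange :: "'a set set \<Rightarrow> bool" where
  "unique_exchange \<B> \<longleftrightarrow> (\<forall>B\<in>\<B>. \<forall>x\<in>B. \<forall>y y'. y \<notin> B \<longrightarrow> y' \<notin> B \<longrightarrow>
     insert y (B - {x}) \<in> \<B> \<longrightarrow> insert y' (B - {x}) \<in> \<B> \<longrightarrow> y = y')"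

text \<open>Two exchanges of the same x would give a triangle in the base graph.\<close>
lemma hypercube_base_graph_unique_exchange:
  assumes "base_graph_iso_hypercube \<B> d"
  shows "unique_exchange \<B>"
  unfolding unique_exchange_def
proof (intro ballI allI impI)
  fix B x y y'
  assume B: "B \<in> \<B>" and x: "x \<in> B" and y: "y \<notin> B" and y': "y' \<notin> B"
    and B1: "insert y (B - {x}) \<in> \<B>" and B2: "insert y' (B - {x}) \<in> \<B>"
  obtain f :: "'a set \<Rightarrow> nat set" where f:
    "\<forall>B1\<in>\<B>. \<forall>B2\<in>\<B>. card (sdiff B1 B2) = 2 \<longleftrightarrow> card (sdiff (f B1) (f B2)) = 1"
    using assms unfolding base_graph_iso_hypercube_def by blast
  have adjacent: "card (sdiff (f X) (f Y)) = 1"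
    if "X \<in> \<B>" "Y \<in> \<B>" "sdiff X Y = {u, v}" "u \<noteq> v" for X Y u v
  proof -
    have "card (sdiff X Y) = 2" using that(3,4) by simp
    then show ?thesis using f that(1,2) by blast
  qed
  show "y = y'"
  proof (rule ccontr)
    assume yy': "y \<noteq> y'"
    have "sdiff (insert y (B - {x})) (insert y' (B - {x})) = {y, y'}"
      using y y' x yy' unfolding sdiff_def by auto
    then have "card (sdiff (f (insert y (B - {x}))) (f (insert y' (B - {x})))) = 1"
      using adjacent B1 B2 yy' by blast
    moreover have "card (sdiff (f B) (f (insert y (B - {x})))) = 1"
      using adjacent[OF B B1 sdiff_exchange[OF x y]] x y by blast
    moreover have "card (sdiff (f B) (f (insert y' (B - {x})))) = 1"
      using adjacent[OF B B2 sdiff_exchange[OF x y']] x y' by blast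
    ultimately show False using no_hypercube_triangle by blast
  qed
qed

lemma matroid_bases_antichain:
  assumes "matroid_bases \<B>" "B1 \<in> \<B>" "B2 \<in> \<B>" "B1 \<subseteq> B2"
  shows "B1 = B2"
proof (rule ccontr)
  assume "B1 \<noteq> B2"
  then obtain z where "z \<in> B2 - B1" using assms(4) by blast
  then obtain y where "y \<in> B1 - B2" using assms(1-3) unfolding matroid_bases_def by blast
  then show False using assms(4) by blast
qed

text \<open>Each
  exchange M offers from a base of S is also offered by S, so S is closed under walking
  towards any base of M.\<close>
lemma unique_exchange_submatroid_eq:
  assumes M: "matroid_bases \<B>" and uniq: "unique_exchange \<B>"
    and S: "matroid_bases S" and sub: "S \<subseteq> \<B>"
    and common: "\<And>x. \<forall>B\<in>S. x \<in> B \<Longrightarrow> \<forall>B\<in>\<B>. x \<in> B"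
  shows "S = \<B>"
proof -
  have reach: "B2 \<in> S" if "B1 \<in> S" "B2 \<in> \<B>" "card (B1 - B2) = n" for n B1 B2
    using that
  proof (induction n arbitrary: B1)
    case 0
    then have "B1 \<subseteq> B2" by auto
    then show ?case using matroid_bases_antichain[OF M] 0 sub by blast
  next
    case (Suc n)
    then have "B1 - B2 \<noteq> {}" by (metis card.empty nat.distinct(1))
    then obtain x where x: "x \<in> B1 - B2" by blast
    have B1M: "B1 \<in> \<B>" using Suc.prems(1) sub by blast
    obtain y where y: "y \<in> B2 - B1" "insert y (B1 - {x}) \<in> \<B>"
      using M B1M Suc.prems(2) x unfolding matroid_bases_def by blast
    obtain B' where B': "B' \<in> S" "x \<notin> B'"
      using common[of x] x Suc.prems(2) by blast
    obtain y' where y': "y' \<in> B' - B1" "insert y' (B1 - {x}) \<in> S"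
      using S Suc.prems(1) B' x unfolding matroid_bases_def by blast
    have "y' = y" using uniq B1M x y y' sub unfolding unique_exchange_def by blast
    then have next_base: "insert y (B1 - {x}) \<in> S" using y' by simp
    have "insert y (B1 - {x}) - B2 = (B1 - B2) - {x}" using y(1) by auto
    then have "card (insert y (B1 - {x}) - B2) = n" using Suc.prems(3) x by simp
    then show ?case using Suc.IH[OF next_base Suc.prems(2)] by simp
  qed
  obtain B0 where "B0 \<in> S" using S unfolding matroid_bases_def by auto
  then have "\<B> \<subseteq> S" using reach by blast
  then show ?thesis using sub by blast
qed

lemma unique_exchange_centroid_piece:
  assumes M: "matroid_bases \<B>" and uniq: "unique_exchange \<B>" and S: "matroid_bases S"
    and sub: "base_polytope S \<subseteq> base_polytope \<B>" and c: "centroid \<B> \<in> base_polytope S"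
  shows "S = \<B>"
proof (rule unique_exchange_submatroid_eq[OF M uniq S])
  show "S \<subseteq> \<B>" using sub by (rule base_polytope_subset_imp_bases_subset)
  have nonempty: "\<B> \<noteq> {}" using M unfolding matroid_bases_def by blast
  show "\<forall>B\<in>\<B>. x \<in> B" if "\<forall>B\<in>S. x \<in> B" for x
    by (rule common_element_through_centroid[OF nonempty c that])
qed


theorem corollary7:
  fixes \<B> :: "'n::finite set set" and d :: nat
  assumes "matroid_bases \<B>"
    and "base_graph_iso_hypercube \<B> d"
  shows "indecomposable \<B>"
  unfolding indecomposable_def decomposable_def
proof (intro notI, elim exE conjE)
  fix t :: nat and Ms :: "nat \<Rightarrow> 'n set set"
  assume pieces: "\<forall>i<t. matroid_bases (Ms i)"
    and cover: "base_polytope \<B> = (\<Union>i<t. base_polytope (Ms i))"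
    and proper: "\<forall>i<t. base_polytope (Ms i) \<noteq> base_polytope \<B>"
  have "centroid \<B> \<in> base_polytope \<B>"
    using assms(1) centroid_mem_base_polytope unfolding matroid_bases_def by blast
  then obtain i where i: "i < t" "centroid \<B> \<in> base_polytope (Ms i)" using cover by auto
  have "Ms i = \<B>"
  proof (rule unique_exchange_centroid_piece[OF assms(1)])
    show "unique_exchange \<B>" using assms(2) by (rule hypercube_base_graph_unique_exchange)
  qed (use pieces cover i in auto)
  then show False using proper i(1) by blast
qed

end
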